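(* For every graph $G=(V,E)$, the projection onto the $x$-variables of the linear relaxation of $\mathcal{E}(G)$ is contained in the linear relaxation of $\mathcal{N}_2(G)$; consequently, for every weight vector $w$, the linear relaxation value of $\mathcal{E}(G)$ is at most that of $\mathcal{N}_2(G)$. Moreover, the containment is strict when $G$ is the star $K_{1,3}$.
   Context: $N(u)$ is the neighborhood of $u$, $\delta(v)$ the set of edges incident to $v$, $x(A)=\sum_{a\in A}x_a$. Both formulations compute a maximum $w$-weighted co-2-plex (vertex set inducing maximum degree at most 1). $\mathcal{N}_2(G)=\max\{w^\top x: x\in\{0,1\}^V,\ x(N(u))+(|N(u)|-1)x_u\le|N(u)|\ \forall u\in V\}$. $\mathcal{E}(G)=\max\{w^\top x: (x,y)\in\{0,1\}^V\times\{0,1\}^E,\ y(\delta(v))\le x_v\ \forall v\in V,\ y_e\ge 0\ \forall e\in E,\ x_u+x_v-y_{uv}\le 1\ \forall uv\in E\}$. The linear relaxation of a formulation replaces the binary constraints by $[0,1]$ bounds. *)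

theory Defs
  imports Complex_Main
begin

definition graph :: "'a set \<Rightarrow> 'a set set \<Rightarrow> bool" where
  "graph V E \<longleftrightarrow> finite V \<and>
     (\<forall>e\<in>E. \<exists>u v. u \<noteq> v \<and> u \<in> V \<and> v \<in> V \<and> e = {u, v})"

definition nbhd :: "'a set \<Rightarrow> 'a set set \<Rightarrow> 'a \<Rightarrow> 'a set" where
  "nbhd V E u = {v \<in> V. {u, v} \<in> E}"

definition incident :: "'a set set \<Rightarrow> 'a \<Rightarrow> 'a set set" where
  "incident E v = {e \<in> E. v \<in> e}"

text \<open>Linear relaxation of N_2(G). Vectors in R^V are functions vanishing outside V.\<close>
definition LP_N2 :: "'a set \<Rightarrow> 'a set set \<Rightarrow> ('a \<Rightarrow> real) set" where
  "LP_N2 V E = {x. (\<forall>v. v \<notin> V \<longrightarrow> x v = 0) \<and>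
      (\<forall>v\<in>V. 0 \<le> x v \<and> x v \<le> 1) \<and>
      (\<forall>u\<in>V. sum x (nbhd V E u) + (real (card (nbhd V E u)) - 1) * x u
                \<le> real (card (nbhd V E u)))}"

text \<open>Linear relaxation of E(G). Vectors in R^E are functions vanishing outside E.\<close>
definition LP_E :: "'a set \<Rightarrow> 'a set set \<Rightarrow> (('a \<Rightarrow> real) \<times> ('a set \<Rightarrow> real)) set" where
  "LP_E V E = {(x, y). (\<forall>v. v \<notin> V \<longrightarrow> x v = 0) \<and> (\<forall>e. e \<notin> E \<longrightarrow> y e = 0) \<and>
      (\<forall>v\<in>V. 0 \<le> x v \<and> x v \<le> 1) \<and> (\<forall>e\<in>E. 0 \<le> y e \<and> y e \<le> 1) \<and>
      (\<forall>v\<in>V. sum y (incident E v) \<le> x v) \<and>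
      (\<forall>e\<in>E. y e \<ge> 0) \<and>
      (\<forall>u v. {u, v} \<in> E \<longrightarrow> x u + x v - y {u, v} \<le> 1)}"

definition LPval_N2 :: "'a set \<Rightarrow> 'a set set \<Rightarrow> ('a \<Rightarrow> real) \<Rightarrow> real" where
  "LPval_N2 V E w = Sup ((\<lambda>x. \<Sum>v\<in>V. w v * x v) ` LP_N2 V E)"

definition LPval_E :: "'a set \<Rightarrow> 'a set set \<Rightarrow> ('a \<Rightarrow> real) \<Rightarrow> real" where
  "LPval_E V E w = Sup ((\<lambda>(x, y). \<Sum>v\<in>V. w v * x v) ` LP_E V E)"

definition K13_V :: "nat set" where "K13_V = {0, 1, 2, 3}"
definition K13_E :: "nat set set" where "K13_E = {{0, 1}, {0, 2}, {0, 3}}"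

end

theory Submission
  imports Defs
begin

text \<open>
  For \<open>(x, y)\<close> in the relaxation of \<open>\<E>(G)\<close>, the edge constraints and \<open>y \<ge> 0\<close> give
  \<open>y {u, v} \<ge> max 0 (x u + x v - 1)\<close>, and summing over the edges at \<open>u\<close> yields
  \<open>(\<Sum>v\<in>N(u). max 0 (x u + x v - 1)) \<le> x u\<close>. Dropping the \<open>max\<close> gives exactly the
  neighbourhood inequality of \<open>\<N>\<^sub>2(G)\<close>; the comparison of LP values follows since the
  objective only depends on \<open>x\<close>. On \<open>K\<^sub>1\<^sub>,\<^sub>3\<close> the point with centre \<open>1/2\<close> and
  leaves \<open>1, 1, 0\<close> satisfies the \<open>\<N>\<^sub>2\<close> inequalities, but at the centre the \<open>max\<close>
  bound reads \<open>1 \<le> 1/2\<close>: the third edge can no longer compensate with a negative term.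
\<close>

lemma incident_eq_image_nbhd:
  assumes "graph V E" and "u \<in> V"
  shows "incident E u = (\<lambda>v. {u, v}) ` nbhd V E u"
proof
  show "(\<lambda>v. {u, v}) ` nbhd V E u \<subseteq> incident E u"
    by (auto simp: nbhd_def incident_def)
  show "incident E u \<subseteq> (\<lambda>v. {u, v}) ` nbhd V E u"
  proof
    fix e assume "e \<in> incident E u"
    then have "e \<in> E" "u \<in> e" by (auto simp: incident_def)
    then obtain v where "v \<in> V" "e = {u, v}"
      using assms(1) unfolding graph_def by (metis insertE insert_commute singletonD)
    with \<open>e \<in> E\<close> show "e \<in> (\<lambda>v. {u, v}) ` nbhd V E u"
      by (auto simp: nbhd_def)
  qed
qed

lemma self_notin_nbhd:
  assumes "graph V E"
  shows "u \<notin> nbhd V E u"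
  using assms by (force simp: graph_def nbhd_def doubleton_eq_iff)

lemma sum_incident_eq_sum_nbhd:
  assumes "graph V E" and "u \<in> V"
  shows "sum y (incident E u) = (\<Sum>v\<in>nbhd V E u. y {u, v})"
proof -
  have "inj_on (\<lambda>v. {u, v}) (nbhd V E u)"
    using self_notin_nbhd[OF assms(1)] by (auto intro!: inj_onI simp: doubleton_eq_iff)
  then show ?thesis
    by (simp add: incident_eq_image_nbhd[OF assms] sum.reindex)
qed

lemma LP_E_nbhd_bound:
  assumes "graph V E" and "(x, y) \<in> LP_E V E" and "u \<in> V"
  shows "(\<Sum>v\<in>nbhd V E u. max 0 (x u + x v - 1)) \<le> x u"
proof -
  from assms(2) have edge: "\<forall>u v. {u, v} \<in> E \<longrightarrow> x u + x v - y {u, v} \<le> 1"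
    and nonneg: "\<forall>e\<in>E. 0 \<le> y e"
    by (simp_all add: LP_E_def)
  have "(\<Sum>v\<in>nbhd V E u. max 0 (x u + x v - 1)) \<le> (\<Sum>v\<in>nbhd V E u. y {u, v})"
  proof (rule sum_mono)
    fix v assume "v \<in> nbhd V E u"
    then have "{u, v} \<in> E" by (simp add: nbhd_def)
    with edge nonneg show "max 0 (x u + x v - 1) \<le> y {u, v}" by force
  qed
  also have "\<dots> = sum y (incident E u)"
    by (rule sum_incident_eq_sum_nbhd[OF assms(1,3), symmetric])
  also have "\<dots> \<le> x u"
    using assms(2,3) by (simp add: LP_E_def)
  finally show ?thesis .
qed

lemma fst_LP_E_subset_LP_N2:
  assumes "graph V E"
  shows "fst ` LP_E V E \<subseteq> LP_N2 V E"
proof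
  fix x assume "x \<in> fst ` LP_E V E"
  then obtain y where xy: "(x, y) \<in> LP_E V E" by force
  have "sum x (nbhd V E u) + (real (card (nbhd V E u)) - 1) * x u \<le> real (card (nbhd V E u))"
    if "u \<in> V" for u
  proof -
    have "(\<Sum>v\<in>nbhd V E u. x u + x v - 1) \<le> x u"
      using LP_E_nbhd_bound[OF assms xy that] by (rule order_trans[OF sum_mono[OF max.cobounded2]])
    then show ?thesis
      by (simp add: sum.distrib sum_subtractf algebra_simps)
  qed
  with xy show "x \<in> LP_N2 V E" by (simp add: LP_E_def LP_N2_def)
qed

lemma LP_N2_objective_bdd_above:
  "bdd_above ((\<lambda>x. \<Sum>v\<in>V. w v * x v) ` LP_N2 V E)"
proof (rule bdd_aboveI2)
  fix x assume "x \<in> LP_N2 V E"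
  then have "0 \<le> x v \<and> x v \<le> 1" if "v \<in> V" for v
    using that by (simp add: LP_N2_def)
  then have "w v * x v \<le> \<bar>w v\<bar>" if "v \<in> V" for v
    using that abs_mult[of "w v" "x v"] abs_le_D1[of "w v * x v"] mult_left_le[of "x v" "\<bar>w v\<bar>"]
    by fastforce
  then show "(\<Sum>v\<in>V. w v * x v) \<le> (\<Sum>v\<in>V. \<bar>w v\<bar>)" by (rule sum_mono)
qed

lemma LPval_E_le_LPval_N2:
  assumes "graph V E"
  shows "LPval_E V E w \<le> LPval_N2 V E w"
proof -
  have "(\<lambda>(x, y). \<Sum>v\<in>V. w v * x v) ` LP_E V E = (\<lambda>x. \<Sum>v\<in>V. w v * x v) ` fst ` LP_E V E"
    by (force simp: image_image case_prod_beta)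
  moreover have "((\<lambda>_. 0), (\<lambda>_. 0)) \<in> LP_E V E"
    by (simp add: LP_E_def incident_def)
  ultimately show ?thesis
    unfolding LPval_E_def LPval_N2_def
    using fst_LP_E_subset_LP_N2[OF assms] LP_N2_objective_bdd_above
    by (intro cSup_subset_mono) auto
qed

lemma graph_K13: "graph K13_V K13_E"
proof -
  have "\<exists>u v. u \<noteq> v \<and> u \<in> K13_V \<and> v \<in> K13_V \<and> {0, k} = {u, v}" if "k \<in> {1, 2, 3}" for k :: nat
    using that by (intro exI[of _ 0] exI[of _ k]) (auto simp: K13_V_def)
  then show ?thesis
    unfolding graph_def K13_E_def by (simp add: K13_V_def)
qed

lemma nbhd_K13:
  "nbhd K13_V K13_E v = (if v = 0 then {1, 2, 3} else if v \<in> {1, 2, 3} then {0} else {})"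
  unfolding nbhd_def K13_V_def K13_E_def by (auto simp: doubleton_eq_iff)

definition K13_witness :: "nat \<Rightarrow> real" where
  "K13_witness v = (if v = 0 then 1/2 else if v \<in> {1, 2} then 1 else 0)"

lemma K13_witness_in_LP_N2: "K13_witness \<in> LP_N2 K13_V K13_E"
  unfolding LP_N2_def by (simp add: nbhd_K13) (simp add: K13_V_def K13_witness_def)

lemma K13_witness_notin_fst_LP_E: "K13_witness \<notin> fst ` LP_E K13_V K13_E"
proof
  assume "K13_witness \<in> fst ` LP_E K13_V K13_E"
  then obtain y where "(K13_witness, y) \<in> LP_E K13_V K13_E" by force
  moreover have "(0::nat) \<in> K13_V" by (simp add: K13_V_def)
  ultimately have "(\<Sum>v\<in>{1, 2, 3}. max 0 (K13_witness 0 + K13_witness v - 1)) \<le> K13_witness 0"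
    using LP_E_nbhd_bound[OF graph_K13] by (metis nbhd_K13)
  then show False by (simp add: K13_witness_def)
qed

theorem mainTheorem16:
  shows "(\<forall>(V :: 'a set) E. graph V E \<longrightarrow>
            fst ` LP_E V E \<subseteq> LP_N2 V E \<and>
            (\<forall>w. LPval_E V E w \<le> LPval_N2 V E w))
         \<and> fst ` LP_E K13_V K13_E \<subset> LP_N2 K13_V K13_E"
proof (intro conjI allI impI psubsetI)
  show "fst ` LP_E V E \<subseteq> LP_N2 V E" "LPval_E V E w \<le> LPval_N2 V E w"
    if "graph V E" for V :: "'a set" and E w
    using that by (simp_all add: fst_LP_E_subset_LP_N2 LPval_E_le_LPval_N2)
  show "fst ` LP_E K13_V K13_E \<subseteq> LP_N2 K13_V K13_E"
    by (rule fst_LP_E_subset_LP_N2[OF graph_K13])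
  show "fst ` LP_E K13_V K13_E \<noteq> LP_N2 K13_V K13_E"
    using K13_witness_in_LP_N2 K13_witness_notin_fst_LP_E by blast
qed

end
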